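(* Let $G$ be a graph of minimum degree at least $2$, and let $\Omega$ be a total $2$-coalition partition of $G$. Then (i) $\Delta(\mathrm{TC}_2\mathrm{G}(G,\Omega))\le \Delta(G)-1$, and (ii) $\beta(\mathrm{TC}_2\mathrm{G}(G,\Omega))\le \delta(G)-1$.
   Context: All graphs are finite, simple and connected. $N(v)$ denotes the open neighborhood of $v$. A set $S\subseteq V(G)$ is a total $2$-dominating set if $|N(v)\cap S|\ge 2$ for every $v\in V(G)$. Two disjoint sets $U,W\subseteq V(G)$ form a total $2$-coalition if neither is a total $2$-dominating set but $U\cup W$ is. A total $2$-coalition partition of $G$ is a partition $\Omega$ of $V(G)$ in which every set forms a total $2$-coalition with some other set of $\Omega$. The total $2$-coalition graph $\mathrm{TC}_2\mathrm{G}(G,\Omega)$ has vertex set $\Omega$, two sets being adjacent if they form a total $2$-coalition in $G$. $\Delta(H)$ is the maximum degree and $\beta(H)$ the vertex cover number of a graph $H$. *)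

theory Defs
  imports Main
begin

definition connected_graph :: "'a set \<Rightarrow> ('a \<Rightarrow> 'a \<Rightarrow> bool) \<Rightarrow> bool" where
  "connected_graph V E \<longleftrightarrow>
     (\<forall>u v. E u v \<longrightarrow> u \<in> V \<and> v \<in> V) \<and>
     (\<forall>u v. E u v \<longrightarrow> E v u) \<and>
     (\<forall>v. \<not> E v v) \<and>
     (\<forall>u\<in>V. \<forall>v\<in>V. E\<^sup>*\<^sup>* u v)"

definition fin_simple_connected_graph :: "'a set \<Rightarrow> ('a \<Rightarrow> 'a \<Rightarrow> bool) \<Rightarrow> bool" where
  "fin_simple_connected_graph V E \<longleftrightarrow> finite V \<and> V \<noteq> {} \<and> connected_graph V E"

definition nbhd :: "'a set \<Rightarrow> ('a \<Rightarrow> 'a \<Rightarrow> bool) \<Rightarrow> 'a \<Rightarrow> 'a set" where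
  "nbhd V E v = {u \<in> V. E v u}"

definition degree :: "'a set \<Rightarrow> ('a \<Rightarrow> 'a \<Rightarrow> bool) \<Rightarrow> 'a \<Rightarrow> nat" where
  "degree V E v = card (nbhd V E v)"

definition max_degree :: "'a set \<Rightarrow> ('a \<Rightarrow> 'a \<Rightarrow> bool) \<Rightarrow> nat" where
  "max_degree V E = Max (degree V E ` V)"

definition min_degree :: "'a set \<Rightarrow> ('a \<Rightarrow> 'a \<Rightarrow> bool) \<Rightarrow> nat" where
  "min_degree V E = Min (degree V E ` V)"

definition is_vertex_cover :: "'a set \<Rightarrow> ('a \<Rightarrow> 'a \<Rightarrow> bool) \<Rightarrow> 'a set \<Rightarrow> bool" where
  "is_vertex_cover V E C \<longleftrightarrow> C \<subseteq> V \<and> (\<forall>u\<in>V. \<forall>v\<in>V. E u v \<longrightarrow> u \<in> C \<or> v \<in> C)"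

definition vertex_cover_number :: "'a set \<Rightarrow> ('a \<Rightarrow> 'a \<Rightarrow> bool) \<Rightarrow> nat" where
  "vertex_cover_number V E = Min (card ` {C. is_vertex_cover V E C})"

definition total_2_dominating :: "'a set \<Rightarrow> ('a \<Rightarrow> 'a \<Rightarrow> bool) \<Rightarrow> 'a set \<Rightarrow> bool" where
  "total_2_dominating V E S \<longleftrightarrow> S \<subseteq> V \<and> (\<forall>v\<in>V. card (nbhd V E v \<inter> S) \<ge> 2)"

definition total_2_coalition :: "'a set \<Rightarrow> ('a \<Rightarrow> 'a \<Rightarrow> bool) \<Rightarrow> 'a set \<Rightarrow> 'a set \<Rightarrow> bool" where
  "total_2_coalition V E U W \<longleftrightarrow>
     U \<inter> W = {} \<and> \<not> total_2_dominating V E U \<and> \<not> total_2_dominating V E W \<and>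
     total_2_dominating V E (U \<union> W)"

definition is_partition :: "'a set \<Rightarrow> 'a set set \<Rightarrow> bool" where
  "is_partition V \<Omega> \<longleftrightarrow> \<Union>\<Omega> = V \<and> {} \<notin> \<Omega> \<and>
     (\<forall>X\<in>\<Omega>. \<forall>Y\<in>\<Omega>. X \<noteq> Y \<longrightarrow> X \<inter> Y = {})"

definition total_2_coalition_partition :: "'a set \<Rightarrow> ('a \<Rightarrow> 'a \<Rightarrow> bool) \<Rightarrow> 'a set set \<Rightarrow> bool" where
  "total_2_coalition_partition V E \<Omega> \<longleftrightarrow> is_partition V \<Omega> \<and>
     (\<forall>X\<in>\<Omega>. \<exists>Y\<in>\<Omega>. Y \<noteq> X \<and> total_2_coalition V E X Y)"

text \<open>The total 2-coalition graph TC2G(G, Omega): vertex set Omega, adjacency relation below.\<close>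
definition tc2g_adj :: "'a set \<Rightarrow> ('a \<Rightarrow> 'a \<Rightarrow> bool) \<Rightarrow> 'a set set \<Rightarrow> 'a set \<Rightarrow> 'a set \<Rightarrow> bool" where
  "tc2g_adj V E \<Omega> X Y \<longleftrightarrow> X \<in> \<Omega> \<and> Y \<in> \<Omega> \<and> X \<noteq> Y \<and> total_2_coalition V E X Y"

end

theory Submission
  imports Defs
begin

text \<open>Fix a vertex v and weigh every part Z of the partition by w(Z) = |N(v) \<inter> Z|. The weights
of the parts add up to at most deg v, and the two ends X, Y of an edge of the coalition graph
satisfy w(X) + w(Y) \<ge> 2, because X \<union> Y is total 2-dominating. For a part X, choosing v with
w(X) \<le> 1 (which exists since X alone is not total 2-dominating) leaves room for at most
deg v - 1 neighbours of X. Choosing v of minimum degree, the parts of positive weight form a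
vertex cover of at most \<delta> parts, and one of them can be dropped: either some part has weight
at least 2, or all edges join two parts of weight 1.\<close>

lemma degree_le_weight_bound:
  fixes w :: "'a \<Rightarrow> nat"
  assumes "finite V" "x \<in> V" "\<not> E x x"
    and "sum w V \<le> d" "w x \<le> 1"
    and edge: "\<And>y. y \<in> V \<Longrightarrow> E x y \<Longrightarrow> 2 \<le> w x + w y"
  shows "degree V E x \<le> d - 1"
proof -
  define N where "N = nbhd V E x"
  have N: "finite N" "N \<subseteq> V" "x \<notin> N"
    using assms(1,3) finite_subset unfolding N_def nbhd_def by auto
  have "w x + sum w N = sum w (insert x N)"
    using N by simp
  also have "\<dots> \<le> sum w V"
    using N assms(1,2) by (intro sum_mono2) auto
  finally have "w x + sum w N \<le> d"
    using assms(4) by linarith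
  moreover have "card N * (2 - w x) \<le> sum w N"
  proof -
    have "\<forall>y\<in>N. 2 - w x \<le> w y"
      using edge unfolding N_def nbhd_def by fastforce
    then show ?thesis
      using sum_bounded_below[of N "2 - w x" w] by simp
  qed
  ultimately have "w x + card N * (2 - w x) \<le> d"
    by linarith
  then show ?thesis
    using \<open>w x \<le> 1\<close> unfolding degree_def N_def[symmetric] by (cases "w x") auto
qed

lemma vertex_cover_number_le_card:
  assumes "finite V" "is_vertex_cover V E C"
  shows "vertex_cover_number V E \<le> card C"
proof -
  have "{C. is_vertex_cover V E C} \<subseteq> Pow V"
    by (auto simp: is_vertex_cover_def)
  then have "finite {C. is_vertex_cover V E C}"
    using assms(1) finite_subset by blast
  then show ?thesis
    using assms(2) unfolding vertex_cover_number_def by simp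
qed

lemma vertex_cover_number_le_weight_bound:
  fixes w :: "'a \<Rightarrow> nat"
  assumes "finite V" "\<And>x. \<not> E x x" "sum w V \<le> d"
    and edge: "\<And>x y. x \<in> V \<Longrightarrow> y \<in> V \<Longrightarrow> E x y \<Longrightarrow> 2 \<le> w x + w y"
  shows "vertex_cover_number V E \<le> d - 1"
proof -
  define C where "C = {z \<in> V. w z \<noteq> 0}"
  have C: "finite C" "C \<subseteq> V"
    using assms(1) unfolding C_def by auto
  have "card C \<le> sum w C"
    using sum_bounded_below[of C 1 w] unfolding C_def by simp
  moreover have "sum w C \<le> d"
    using C assms(1,3) sum_mono2[of V C w] by linarith
  ultimately have card_C: "card C \<le> d"
    by linarith
  show ?thesis
  proof (cases "\<exists>z\<in>C. 2 \<le> w z")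
    case True
    then obtain z where z: "z \<in> C" "2 \<le> w z"
      by blast
    have "card (C - {z}) \<le> sum w (C - {z})"
      using sum_bounded_below[of "C - {z}" 1 w] unfolding C_def by simp
    moreover have "sum w C = w z + sum w (C - {z})"
      using C z(1) by (simp add: sum.remove)
    ultimately have "card C \<le> d - 1"
      using C z \<open>sum w C \<le> d\<close> by (simp add: card_Diff_singleton)
    moreover have "is_vertex_cover V E C"
      using C edge unfolding is_vertex_cover_def C_def by fastforce
    ultimately show ?thesis
      using vertex_cover_number_le_card[OF assms(1)] by fastforce
  next
    case False
    then have both_ends: "x \<in> C \<and> y \<in> C" if "x \<in> V" "y \<in> V" "E x y" for x y
      using edge[OF that] that unfolding C_def by fastforce
    obtain z where z: "C = {} \<or> z \<in> C"
      by blast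
    have "is_vertex_cover V E (C - {z})"
      using C both_ends assms(2) unfolding is_vertex_cover_def by blast
    moreover have "card (C - {z}) \<le> d - 1"
      using z card_C C(1) by (auto simp: card_Diff_singleton_if)
    ultimately show ?thesis
      using vertex_cover_number_le_card[OF assms(1)] by fastforce
  qed
qed

lemma degree_le_max_degree:
  assumes "finite V" "v \<in> V"
  shows "degree V E v \<le> max_degree V E"
  unfolding max_degree_def using assms by (intro Max_ge) simp_all

lemma max_degree_le:
  assumes "finite V" "V \<noteq> {}" "\<And>v. v \<in> V \<Longrightarrow> degree V E v \<le> k"
  shows "max_degree V E \<le> k"
  unfolding max_degree_def using assms by (intro Max.boundedI) auto

lemma min_degree_attained:
  assumes "finite V" "V \<noteq> {}"
  obtains v where "v \<in> V" "degree V E v = min_degree V E"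
proof -
  have "Min (degree V E ` V) \<in> degree V E ` V"
    using assms by (intro Min_in) simp_all
  then obtain v where "v \<in> V" "degree V E v = min_degree V E"
    unfolding min_degree_def by (metis imageE)
  then show thesis
    by (rule that)
qed

lemma is_partition_finite:
  assumes "is_partition V \<Omega>" "finite V"
  shows "finite \<Omega>"
proof -
  have "\<Omega> \<subseteq> Pow V"
    using assms(1) unfolding is_partition_def by blast
  then show ?thesis
    using assms(2) finite_subset by blast
qed

lemma is_partition_nonempty:
  assumes "is_partition V \<Omega>" "V \<noteq> {}"
  shows "\<Omega> \<noteq> {}"
  using assms unfolding is_partition_def by auto

lemma sum_card_Int_le_card:
  assumes "finite A" "finite F"
    and "\<And>X Y. X \<in> F \<Longrightarrow> Y \<in> F \<Longrightarrow> X \<noteq> Y \<Longrightarrow> X \<inter> Y = {}"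
  shows "(\<Sum>Z\<in>F. card (A \<inter> Z)) \<le> card A"
proof -
  have "(\<Sum>Z\<in>F. card (A \<inter> Z)) = card (\<Union>Z\<in>F. A \<inter> Z)"
    using assms by (subst card_UN_disjoint) auto
  also have "\<dots> \<le> card A"
    using assms(1) by (intro card_mono) auto
  finally show ?thesis .
qed

lemma is_partition_sum_card_nbhd_Int_le_degree:
  assumes "is_partition V \<Omega>" "finite V"
  shows "(\<Sum>Z\<in>\<Omega>. card (nbhd V E v \<inter> Z)) \<le> degree V E v"
  unfolding degree_def
proof (rule sum_card_Int_le_card)
  show "finite (nbhd V E v)"
    using assms(2) by (simp add: nbhd_def)
  show "finite \<Omega>"
    using assms by (rule is_partition_finite)
qed (use assms(1) in \<open>simp add: is_partition_def\<close>)

lemma total_2_coalition_card_nbhd_Int: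
  assumes "total_2_coalition V E X Y" "finite V" "v \<in> V"
  shows "2 \<le> card (nbhd V E v \<inter> X) + card (nbhd V E v \<inter> Y)"
proof -
  have "X \<inter> Y = {}" "total_2_dominating V E (X \<union> Y)"
    using assms(1) unfolding total_2_coalition_def by blast+
  then have "2 \<le> card (nbhd V E v \<inter> (X \<union> Y))"
    using assms(3) unfolding total_2_dominating_def by blast
  also have "\<dots> = card (nbhd V E v \<inter> X) + card (nbhd V E v \<inter> Y)"
    using \<open>X \<inter> Y = {}\<close> assms(2) unfolding Int_Un_distrib
    by (intro card_Un_disjoint) (auto simp: nbhd_def)
  finally show ?thesis .
qed

lemma not_total_2_dominatingE:
  assumes "\<not> total_2_dominating V E X" "X \<subseteq> V"
  obtains v where "v \<in> V" "card (nbhd V E v \<inter> X) \<le> 1"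
proof -
  obtain v where "v \<in> V" "\<not> 2 \<le> card (nbhd V E v \<inter> X)"
    using assms unfolding total_2_dominating_def by blast
  then show thesis
    using that by simp
qed

lemma tc2g_degree_le_degree:
  assumes "finite V" "total_2_coalition_partition V E \<Omega>" "X \<in> \<Omega>"
  obtains v where "v \<in> V" "degree \<Omega> (tc2g_adj V E \<Omega>) X \<le> degree V E v - 1"
proof -
  have part: "is_partition V \<Omega>"
    using assms(2) unfolding total_2_coalition_partition_def by blast
  have "\<not> total_2_dominating V E X"
    using assms(2,3) unfolding total_2_coalition_partition_def total_2_coalition_def by blast
  moreover have "X \<subseteq> V"
    using assms(3) part unfolding is_partition_def by blast
  ultimately obtain v where v: "v \<in> V" "card (nbhd V E v \<inter> X) \<le> 1"
    by (rule not_total_2_dominatingE)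
  have "degree \<Omega> (tc2g_adj V E \<Omega>) X \<le> degree V E v - 1"
  proof (rule degree_le_weight_bound[where w = "\<lambda>Z. card (nbhd V E v \<inter> Z)"])
    show "finite \<Omega>"
      using part assms(1) by (rule is_partition_finite)
    show "(\<Sum>Z\<in>\<Omega>. card (nbhd V E v \<inter> Z)) \<le> degree V E v"
      using part assms(1) by (rule is_partition_sum_card_nbhd_Int_le_degree)
    show "2 \<le> card (nbhd V E v \<inter> X) + card (nbhd V E v \<inter> Y)"
      if "tc2g_adj V E \<Omega> X Y" for Y
      using that total_2_coalition_card_nbhd_Int[OF _ assms(1) v(1)] unfolding tc2g_adj_def by blast
    show "X \<in> \<Omega>" "\<not> tc2g_adj V E \<Omega> X X" "card (nbhd V E v \<inter> X) \<le> 1"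
      using assms(3) v(2) unfolding tc2g_adj_def by simp_all
  qed
  with v(1) show thesis
    by (rule that)
qed

lemma tc2g_vertex_cover_number_le_degree:
  assumes "finite V" "total_2_coalition_partition V E \<Omega>" "v \<in> V"
  shows "vertex_cover_number \<Omega> (tc2g_adj V E \<Omega>) \<le> degree V E v - 1"
proof (rule vertex_cover_number_le_weight_bound[where w = "\<lambda>Z. card (nbhd V E v \<inter> Z)"])
  have part: "is_partition V \<Omega>"
    using assms(2) unfolding total_2_coalition_partition_def by blast
  show "finite \<Omega>"
    using part assms(1) by (rule is_partition_finite)
  show "(\<Sum>Z\<in>\<Omega>. card (nbhd V E v \<inter> Z)) \<le> degree V E v"
    using part assms(1) by (rule is_partition_sum_card_nbhd_Int_le_degree)
  show "2 \<le> card (nbhd V E v \<inter> X) + card (nbhd V E v \<inter> Y)"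
    if "tc2g_adj V E \<Omega> X Y" for X Y
    using that total_2_coalition_card_nbhd_Int[OF _ assms(1,3)] unfolding tc2g_adj_def by blast
  show "\<not> tc2g_adj V E \<Omega> X X" for X
    unfolding tc2g_adj_def by simp
qed

theorem lemma3p4:
  fixes V :: "'a set" and E :: "'a \<Rightarrow> 'a \<Rightarrow> bool" and \<Omega> :: "'a set set"
  assumes "fin_simple_connected_graph V E"
    and "min_degree V E \<ge> 2"
    and "total_2_coalition_partition V E \<Omega>"
  shows "max_degree \<Omega> (tc2g_adj V E \<Omega>) \<le> max_degree V E - 1 \<and>
         vertex_cover_number \<Omega> (tc2g_adj V E \<Omega>) \<le> min_degree V E - 1"
proof
  have V: "finite V" "V \<noteq> {}"
    using assms(1) unfolding fin_simple_connected_graph_def by auto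
  have part: "is_partition V \<Omega>"
    using assms(3) unfolding total_2_coalition_partition_def by blast
  show "max_degree \<Omega> (tc2g_adj V E \<Omega>) \<le> max_degree V E - 1"
  proof (rule max_degree_le)
    show "finite \<Omega>" "\<Omega> \<noteq> {}"
      using is_partition_finite is_partition_nonempty part V by blast+
    fix X
    assume "X \<in> \<Omega>"
    then obtain v where "v \<in> V" "degree \<Omega> (tc2g_adj V E \<Omega>) X \<le> degree V E v - 1"
      using tc2g_degree_le_degree V(1) assms(3) by blast
    then show "degree \<Omega> (tc2g_adj V E \<Omega>) X \<le> max_degree V E - 1"
      using degree_le_max_degree[OF V(1)] by (meson diff_le_mono order_trans)
  qed
  obtain v where "v \<in> V" "degree V E v = min_degree V E"
    using min_degree_attained V by blast
  then show "vertex_cover_number \<Omega> (tc2g_adj V E \<Omega>) \<le> min_degree V E - 1"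
    using tc2g_vertex_cover_number_le_degree V(1) assms(3) by metis
qed

end
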